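(* Let $F$ be a field of characteristic not $2$ and let $L/F$ be any quadratic extension of $F$. Then $L^{(3)}/F$ is a Galois extension.
   Context: All fields are taken inside a fixed quadratic closure $F_q$ of $F$ (the smallest quadratically closed extension of $F$ in an algebraic closure). For a field $K$ of characteristic not $2$, define $K^{(1)}=K$ and, for $n\ge 1$, $K^{(n+1)}$ is the compositum of all quadratic extensions of $K^{(n)}$ which are Galois over $K$. *)

theory Defs
  imports "HOL-Algebra.Algebra"
begin

text \<open>All fields live inside a fixed ambient field R (playing the role of the
quadratic closure F_q of F); subfields are subsets of carrier R.\<close>

definition sq_closed_set :: "('a, 'b) ring_scheme \<Rightarrow> 'a set \<Rightarrow> bool" where
  "sq_closed_set R K \<longleftrightarrow> (\<forall>x\<in>K. \<exists>y\<in>K. y \<otimes>\<^bsub>R\<^esub> y = x)"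

definition quadratic_closure :: "('a, 'b) ring_scheme \<Rightarrow> 'a set \<Rightarrow> bool" where
  "quadratic_closure R F \<longleftrightarrow> field R \<and> subfield F R \<and> sq_closed_set R (carrier R) \<and>
     (\<forall>K. subfield K R \<and> F \<subseteq> K \<and> sq_closed_set R K \<longrightarrow> K = carrier R)"

definition quadratic_ext :: "('a, 'b) ring_scheme \<Rightarrow> 'a set \<Rightarrow> 'a set \<Rightarrow> bool" where
  "quadratic_ext R K M \<longleftrightarrow> subfield K R \<and> subfield M R \<and> K \<subseteq> M \<and> ring.dimension R 2 K M"

definition galois_ext :: "('a, 'b) ring_scheme \<Rightarrow> 'a set \<Rightarrow> 'a set \<Rightarrow> bool" where
  "galois_ext R K M \<longleftrightarrow> subfield K R \<and> subfield M R \<and> K \<subseteq> M \<and>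
     (\<forall>x\<in>M. ring.algebraic R K x \<and>
        (\<exists>rs. distinct rs \<and> set rs \<subseteq> M \<and> length rs = degree (ring.Irr R K x) \<and>
              (\<forall>r\<in>set rs. ring.eval R (ring.Irr R K x) r = \<zero>\<^bsub>R\<^esub>)))"

text \<open>tower_aux R K n = K^(n+1).\<close>
primrec tower_aux :: "('a, 'b) ring_scheme \<Rightarrow> 'a set \<Rightarrow> nat \<Rightarrow> 'a set" where
  "tower_aux R K 0 = K"
| "tower_aux R K (Suc n) =
     generate_field R (tower_aux R K n \<union>
        \<Union>{M. quadratic_ext R (tower_aux R K n) M \<and> galois_ext R K M})"

text \<open>K^(n) for n \<ge> 1 (K^(1) = K).\<close>
definition tower :: "('a, 'b) ring_scheme \<Rightarrow> 'a set \<Rightarrow> nat \<Rightarrow> 'a set" where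
  "tower R K n = tower_aux R K (n - 1)"

end

theory Submission
  imports Defs
begin

text \<open>Every embedding over F of a subfield of R into R extends to an automorphism of R over F:
  a maximal extension (Zorn's lemma) is defined on all of R, since otherwise a square root of a
  non-square of its domain could still be adjoined.  In characteristic not 2, sending such a square
  root b to -b moves any given element outside F, so F is the fixed field of the automorphisms
  over F; moreover every element of R is algebraic over F, because the algebraic elements form a
  subfield closed under square roots.  Consequently the orbit of x consists of roots of its
  minimal polynomial, and the polynomial whose roots are exactly the orbit has coefficients in F,
  so the orbit has as many elements as that degree: a subfield containing F and stable under all
  automorphisms over F is Galois over F.  Finally L, being quadratic over F, is stable, and
  automorphisms preserving K permute the quadratic Galois extensions of K^(n); so every L^(n)
  is stable.\<close>

section \<open>Field embeddings as graphs\<close>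

text \<open>The graph of a field embedding of the subfield \<open>Domain G\<close> into R.  Embeddings are
  represented by their graphs so that the union of a chain of them is again one (Zorn's lemma).\<close>
definition embedding_graph :: "('a, 'b) ring_scheme \<Rightarrow> ('a \<times> 'a) set \<Rightarrow> bool" where
  "embedding_graph R G \<longleftrightarrow> G \<subseteq> carrier R \<times> carrier R \<and> single_valued G \<and> (\<one>\<^bsub>R\<^esub>, \<one>\<^bsub>R\<^esub>) \<in> G \<and>
     (\<forall>x y x' y'. (x, y) \<in> G \<longrightarrow> (x', y') \<in> G \<longrightarrow>
        (x \<oplus>\<^bsub>R\<^esub> x', y \<oplus>\<^bsub>R\<^esub> y') \<in> G \<and> (x \<otimes>\<^bsub>R\<^esub> x', y \<otimes>\<^bsub>R\<^esub> y') \<in> G) \<and>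
     (\<forall>x y. (x, y) \<in> G \<longrightarrow> (\<ominus>\<^bsub>R\<^esub> x, \<ominus>\<^bsub>R\<^esub> y) \<in> G \<and> (x \<noteq> \<zero>\<^bsub>R\<^esub> \<longrightarrow> (inv\<^bsub>R\<^esub> x, inv\<^bsub>R\<^esub> y) \<in> G))"

context field
begin

lemma embedding_graphD:
  assumes "embedding_graph R G"
  shows embedding_graph_carrier: "(x, y) \<in> G \<Longrightarrow> x \<in> carrier R \<and> y \<in> carrier R"
    and embedding_graph_unique: "(x, y) \<in> G \<Longrightarrow> (x, z) \<in> G \<Longrightarrow> y = z"
    and embedding_graph_one: "(\<one>, \<one>) \<in> G"
    and embedding_graph_add: "(x, y) \<in> G \<Longrightarrow> (x', y') \<in> G \<Longrightarrow> (x \<oplus> x', y \<oplus> y') \<in> G"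
    and embedding_graph_mult: "(x, y) \<in> G \<Longrightarrow> (x', y') \<in> G \<Longrightarrow> (x \<otimes> x', y \<otimes> y') \<in> G"
    and embedding_graph_uminus: "(x, y) \<in> G \<Longrightarrow> (\<ominus> x, \<ominus> y) \<in> G"
    and embedding_graph_inv: "(x, y) \<in> G \<Longrightarrow> x \<noteq> \<zero> \<Longrightarrow> (inv x, inv y) \<in> G"
  using assms unfolding embedding_graph_def single_valued_def by blast+

lemma embedding_graph_zero:
  assumes G: "embedding_graph R G"
  shows "(\<zero>, \<zero>) \<in> G"
proof -
  have "(\<one> \<oplus> \<ominus> \<one>, \<one> \<oplus> \<ominus> \<one>) \<in> G"
    using embedding_graph_add[OF G embedding_graph_one[OF G] embedding_graph_uminus[OF G embedding_graph_one[OF G]]] .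
  then show ?thesis by (simp only: r_neg[OF one_closed])
qed

lemma embedding_graph_minus:
  "embedding_graph R G \<Longrightarrow> (x, y) \<in> G \<Longrightarrow> (x', y') \<in> G \<Longrightarrow> (x \<ominus> x', y \<ominus> y') \<in> G"
  unfolding a_minus_def using embedding_graph_add embedding_graph_uminus by blast

lemma embedding_graph_nonzero:
  assumes G: "embedding_graph R G" and xy: "(x, y) \<in> G" and "x \<noteq> \<zero>"
  shows "y \<noteq> \<zero>"
proof
  assume "y = \<zero>"
  have "(x \<otimes> inv x, y \<otimes> inv y) \<in> G"
    using embedding_graph_mult[OF G xy embedding_graph_inv[OF G xy \<open>x \<noteq> \<zero>\<close>]] .
  moreover have "x \<otimes> inv x = \<one>"
    using \<open>x \<noteq> \<zero>\<close> embedding_graph_carrier[OF G xy] field_Units by simp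
  moreover have "inv y \<in> carrier R"
    using embedding_graph_carrier[OF G embedding_graph_inv[OF G xy \<open>x \<noteq> \<zero>\<close>]] by simp
  ultimately have "(\<one>, \<zero>) \<in> G" using \<open>y = \<zero>\<close> by simp
  then show False using embedding_graph_unique[OF G _ embedding_graph_one[OF G]] by force
qed

lemma subfield_Domain_embedding_graph:
  assumes G: "embedding_graph R G"
  shows "subfield (Domain G) R"
proof (rule subfieldI'[OF subringI])
  show "Domain G \<subseteq> carrier R" using embedding_graph_carrier[OF G] by blast
  show "\<one> \<in> Domain G" using embedding_graph_one[OF G] by blast
  show "\<ominus> x \<in> Domain G" if "x \<in> Domain G" for x
    using that embedding_graph_uminus[OF G] by blast
  show "x \<otimes> y \<in> Domain G" if "x \<in> Domain G" "y \<in> Domain G" for x y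
    using that embedding_graph_mult[OF G] by blast
  show "x \<oplus> y \<in> Domain G" if "x \<in> Domain G" "y \<in> Domain G" for x y
    using that embedding_graph_add[OF G] by blast
  show "inv x \<in> Domain G" if "x \<in> Domain G - {\<zero>}" for x
    using that embedding_graph_inv[OF G] by blast
qed

lemma embedding_graph_Id_on:
  assumes "subfield E R"
  shows "embedding_graph R (Id_on E)"
  using subfieldE(3)[OF assms] subringE(3,5,6,7)[OF subfieldE(1)[OF assms]]
    subfield_m_inv(1)[OF assms]
  unfolding embedding_graph_def single_valued_def by auto

lemma embedding_graph_Union_chain:
  assumes "C \<noteq> {}" and chain: "subset.chain {G. embedding_graph R G} C"
  shows "embedding_graph R (\<Union>C)"
proof -
  have G: "embedding_graph R G" if "G \<in> C" for G
    using that chain unfolding subset.chain_def by blast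
  have common: "\<exists>G\<in>C. p \<in> G \<and> q \<in> G" if "p \<in> \<Union>C" "q \<in> \<Union>C" for p q
    using that chain unfolding subset.chain_def by blast
  show ?thesis
    unfolding embedding_graph_def single_valued_def
  proof (intro conjI allI impI)
    show "\<Union>C \<subseteq> carrier R \<times> carrier R" using G embedding_graph_carrier by fast
    show "(\<one>, \<one>) \<in> \<Union>C" using G embedding_graph_one \<open>C \<noteq> {}\<close> by blast
    show "y = z" if "(x, y) \<in> \<Union>C" "(x, z) \<in> \<Union>C" for x y z
      using common[OF that] G embedding_graph_unique by metis
    show "(x \<oplus> x', y \<oplus> y') \<in> \<Union>C" "(x \<otimes> x', y \<otimes> y') \<in> \<Union>C"
      if "(x, y) \<in> \<Union>C" "(x', y') \<in> \<Union>C" for x y x' y'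
      using common[OF that] G embedding_graph_add embedding_graph_mult by blast+
    show "(\<ominus> x, \<ominus> y) \<in> \<Union>C" if "(x, y) \<in> \<Union>C" for x y
      using that G embedding_graph_uminus by blast
    show "(inv x, inv y) \<in> \<Union>C" if "(x, y) \<in> \<Union>C" "x \<noteq> \<zero>" for x y
      using that G embedding_graph_inv by blast
  qed
qed

lemma subfield_Union_chain:
  assumes "C \<noteq> {}" and chain: "subset.chain {E. subfield E R} C"
  shows "subfield (\<Union>C) R"
proof -
  have E: "subring E R" "subfield E R" if "E \<in> C" for E
    using that chain subfieldE(1) unfolding subset.chain_def by blast+
  have common: "\<exists>E\<in>C. x \<in> E \<and> y \<in> E" if "x \<in> \<Union>C" "y \<in> \<Union>C" for x y
    using that chain unfolding subset.chain_def by blast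
  obtain E0 where "E0 \<in> C" using \<open>C \<noteq> {}\<close> by blast
  show ?thesis
  proof (rule subfieldI'[OF subringI])
    show "\<Union>C \<subseteq> carrier R" using subringE(1)[OF E(1)] by blast
    show "\<one> \<in> \<Union>C" using subringE(3)[OF E(1)[OF \<open>E0 \<in> C\<close>]] \<open>E0 \<in> C\<close> by blast
    show "\<ominus> x \<in> \<Union>C" if "x \<in> \<Union>C" for x
      using that subringE(5)[OF E(1)] by blast
    show "x \<otimes> y \<in> \<Union>C" "x \<oplus> y \<in> \<Union>C" if "x \<in> \<Union>C" "y \<in> \<Union>C" for x y
      using common[OF that] subringE(6,7)[OF E(1)] by blast+
    show "inv x \<in> \<Union>C" if "x \<in> \<Union>C - {\<zero>}" for x
      using that subfield_m_inv(1)[OF E(2)] by blast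
  qed
qed

end

section \<open>Adjoining a square root\<close>

definition adjoin_graph :: "('a, 'b) ring_scheme \<Rightarrow> ('a \<times> 'a) set \<Rightarrow> 'a \<Rightarrow> 'a \<Rightarrow> ('a \<times> 'a) set" where
  "adjoin_graph R G b b' =
     {(u \<oplus>\<^bsub>R\<^esub> v \<otimes>\<^bsub>R\<^esub> b, u' \<oplus>\<^bsub>R\<^esub> v' \<otimes>\<^bsub>R\<^esub> b') | u u' v v'. (u, u') \<in> G \<and> (v, v') \<in> G}"

lemma adjoin_graphI:
  "(u, u') \<in> G \<Longrightarrow> (v, v') \<in> G \<Longrightarrow>
     (u \<oplus>\<^bsub>R\<^esub> v \<otimes>\<^bsub>R\<^esub> b, u' \<oplus>\<^bsub>R\<^esub> v' \<otimes>\<^bsub>R\<^esub> b') \<in> adjoin_graph R G b b'"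
  unfolding adjoin_graph_def mem_Collect_eq
  by (intro exI[of _ u] exI[of _ u'] exI[of _ v] exI[of _ v'] conjI refl)

lemma adjoin_graphE:
  assumes "(x, y) \<in> adjoin_graph R G b b'"
  obtains u u' v v' where "(u, u') \<in> G" "(v, v') \<in> G"
    "x = u \<oplus>\<^bsub>R\<^esub> v \<otimes>\<^bsub>R\<^esub> b" "y = u' \<oplus>\<^bsub>R\<^esub> v' \<otimes>\<^bsub>R\<^esub> b'"
proof -
  from assms obtain u u' v v' where "(x, y) = (u \<oplus>\<^bsub>R\<^esub> v \<otimes>\<^bsub>R\<^esub> b, u' \<oplus>\<^bsub>R\<^esub> v' \<otimes>\<^bsub>R\<^esub> b')"
    "(u, u') \<in> G" "(v, v') \<in> G"
    unfolding adjoin_graph_def mem_Collect_eq by (elim exE conjE)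
  then show ?thesis using that by simp
qed

context field
begin

lemma adjoin_coordinates_unique:
  assumes K: "subfield K R" and b: "b \<in> carrier R" "b \<notin> K"
    and uv: "u \<in> K" "v \<in> K" "u' \<in> K" "v' \<in> K" and eq: "u \<oplus> v \<otimes> b = u' \<oplus> v' \<otimes> b"
  shows "u = u'" and "v = v'"
proof -
  have c: "u \<in> carrier R" "v \<in> carrier R" "u' \<in> carrier R" "v' \<in> carrier R"
    using uv subfieldE(3)[OF K] by auto
  show "v = v'"
  proof (rule ccontr)
    assume "v \<noteq> v'"
    then have d: "v \<ominus> v' \<noteq> \<zero>" using c by (metis r_right_minus_eq)
    have "(v \<ominus> v') \<otimes> b = (u \<oplus> v \<otimes> b) \<ominus> u \<ominus> v' \<otimes> b" using c b by algebra
    also have "\<dots> = u' \<ominus> u" unfolding eq using c b by algebra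
    finally have "(v \<ominus> v') \<otimes> b = u' \<ominus> u" .
    moreover have "inv (v \<ominus> v') \<otimes> ((v \<ominus> v') \<otimes> b) = b"
      using d c b field_Units by (simp add: m_assoc[symmetric] Units_l_inv)
    ultimately have "b = inv (v \<ominus> v') \<otimes> (u' \<ominus> u)" by simp
    moreover have "inv (v \<ominus> v') \<in> K" "u' \<ominus> u \<in> K"
      using d uv subfield_m_inv(1)[OF K] subringE(5,7)[OF subfieldE(1)[OF K]]
      unfolding a_minus_def by auto
    ultimately show False using b(2) subringE(6)[OF subfieldE(1)[OF K]] by metis
  qed
  have "u = (u \<oplus> v \<otimes> b) \<ominus> v \<otimes> b" "u' = (u' \<oplus> v' \<otimes> b) \<ominus> v' \<otimes> b"
    using c b by algebra+
  then show "u = u'" using eq \<open>v = v'\<close> by simp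
qed

lemma subset_adjoin_graph:
  assumes G: "embedding_graph R G" and "b \<in> carrier R" "b' \<in> carrier R"
  shows "G \<subseteq> adjoin_graph R G b b'"
proof (rule subrelI)
  fix x y assume xy: "(x, y) \<in> G"
  then have "(x \<oplus> \<zero> \<otimes> b, y \<oplus> \<zero> \<otimes> b') \<in> adjoin_graph R G b b'"
    by (rule adjoin_graphI[OF _ embedding_graph_zero[OF G]])
  moreover have "x \<oplus> \<zero> \<otimes> b = x" "y \<oplus> \<zero> \<otimes> b' = y"
    using embedding_graph_carrier[OF G xy] assms(2,3) by simp_all
  ultimately show "(x, y) \<in> adjoin_graph R G b b'" by simp
qed

lemma root_in_adjoin_graph:
  assumes G: "embedding_graph R G" and "b \<in> carrier R" "b' \<in> carrier R"
  shows "(b, b') \<in> adjoin_graph R G b b'"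
  using adjoin_graphI[OF embedding_graph_zero[OF G] embedding_graph_one[OF G], of R b b'] assms(2,3)
  by simp

lemma adjoin_norm_nonzero:
  assumes K: "subfield K R" and b: "b \<in> carrier R" "b \<notin> K"
    and uv: "u \<in> K" "v \<in> K" "u \<oplus> v \<otimes> b \<noteq> \<zero>"
  shows "u \<otimes> u \<ominus> v \<otimes> v \<otimes> (b \<otimes> b) \<noteq> \<zero>"
proof
  have c: "u \<in> carrier R" "v \<in> carrier R" using uv subfieldE(3)[OF K] by auto
  assume "u \<otimes> u \<ominus> v \<otimes> v \<otimes> (b \<otimes> b) = \<zero>"
  moreover have "u \<otimes> u \<ominus> v \<otimes> v \<otimes> (b \<otimes> b) = (u \<oplus> v \<otimes> b) \<otimes> (u \<oplus> \<ominus> v \<otimes> b)"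
    using c b by algebra
  ultimately have "u \<oplus> \<ominus> v \<otimes> b = \<zero>"
    using integral[of "u \<oplus> v \<otimes> b" "u \<oplus> \<ominus> v \<otimes> b"] uv(3) c b by auto
  then have "u \<oplus> \<ominus> v \<otimes> b = \<zero> \<oplus> \<zero> \<otimes> b" using b by simp
  moreover have "\<ominus> v \<in> K" "\<zero> \<in> K"
    using uv subringE(2,5)[OF subfieldE(1)[OF K]] by auto
  ultimately have "u = \<zero>" "\<ominus> v = \<zero>"
    using adjoin_coordinates_unique[OF K b] uv by blast+
  then show False using uv(3) c b by simp
qed

lemma inv_add_mult_conj:
  assumes c: "u \<in> carrier R" "v \<in> carrier R" "b \<in> carrier R"
    and nonzero: "u \<otimes> u \<ominus> v \<otimes> v \<otimes> (b \<otimes> b) \<noteq> \<zero>"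
  shows "inv (u \<oplus> v \<otimes> b) = u \<otimes> inv (u \<otimes> u \<ominus> v \<otimes> v \<otimes> (b \<otimes> b)) \<oplus>
           \<ominus> (v \<otimes> inv (u \<otimes> u \<ominus> v \<otimes> v \<otimes> (b \<otimes> b))) \<otimes> b"
proof -
  define N where "N = u \<otimes> u \<ominus> v \<otimes> v \<otimes> (b \<otimes> b)"
  have unit: "N \<in> Units R" using nonzero c field_Units unfolding N_def by simp
  have "(u \<oplus> v \<otimes> b) \<otimes> (u \<otimes> inv N \<oplus> \<ominus> (v \<otimes> inv N) \<otimes> b) =
      (u \<otimes> u \<ominus> v \<otimes> v \<otimes> (b \<otimes> b)) \<otimes> inv N"
    using c Units_inv_closed[OF unit] by algebra
  also have "\<dots> = \<one>" using Units_r_inv[OF unit] unfolding N_def .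
  finally show ?thesis
    unfolding N_def[symmetric] using c Units_inv_closed[OF unit] by (intro comm_inv_char) auto
qed

end

locale sqrt_adjunction = field R for R (structure) +
  fixes G :: "('a \<times> 'a) set" and a a' b b' :: 'a
  assumes graph: "embedding_graph R G"
    and radicand: "(a, a') \<in> G"
    and root: "b \<in> carrier R" "b \<otimes> b = a" "b \<notin> Domain G"
    and root': "b' \<in> carrier R" "b' \<otimes> b' = a'"
begin

abbreviation (input) adjoined :: "('a \<times> 'a) set" where
  "adjoined \<equiv> adjoin_graph R G b b'"

lemma graph_carrier: "(u, u') \<in> G \<Longrightarrow> u \<in> carrier R \<and> u' \<in> carrier R"
  using embedding_graph_carrier[OF graph] .

lemma adjoined_carrier:
  assumes "(x, y) \<in> adjoined"
  shows "x \<in> carrier R \<and> y \<in> carrier R"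
  using assms graph_carrier root(1) root'(1) by (auto elim: adjoin_graphE)

lemma adjoined_single_valued:
  assumes "(x, y) \<in> adjoined" "(x, z) \<in> adjoined"
  shows "y = z"
proof -
  obtain u1 u1' v1 v1' where 1: "(u1, u1') \<in> G" "(v1, v1') \<in> G"
    "x = u1 \<oplus> v1 \<otimes> b" "y = u1' \<oplus> v1' \<otimes> b'"
    using assms(1) by (rule adjoin_graphE)
  obtain u2 u2' v2 v2' where 2: "(u2, u2') \<in> G" "(v2, v2') \<in> G"
    "x = u2 \<oplus> v2 \<otimes> b" "z = u2' \<oplus> v2' \<otimes> b'"
    using assms(2) by (rule adjoin_graphE)
  have "u1 = u2" "v1 = v2"
    using adjoin_coordinates_unique[OF subfield_Domain_embedding_graph[OF graph] root(1,3)] 1 2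
    by (metis Domain.DomainI)+
  then show ?thesis
    using 1 2 embedding_graph_unique[OF graph] by metis
qed

lemma adjoined_add:
  assumes "(x, y) \<in> adjoined" "(x2, y2) \<in> adjoined"
  shows "(x \<oplus> x2, y \<oplus> y2) \<in> adjoined"
proof -
  obtain u1 u1' v1 v1' where 1: "(u1, u1') \<in> G" "(v1, v1') \<in> G"
    "x = u1 \<oplus> v1 \<otimes> b" "y = u1' \<oplus> v1' \<otimes> b'"
    using assms(1) by (rule adjoin_graphE)
  obtain u2 u2' v2 v2' where 2: "(u2, u2') \<in> G" "(v2, v2') \<in> G"
    "x2 = u2 \<oplus> v2 \<otimes> b" "y2 = u2' \<oplus> v2' \<otimes> b'"
    using assms(2) by (rule adjoin_graphE)
  note c = graph_carrier[OF 1(1)] graph_carrier[OF 1(2)] graph_carrier[OF 2(1)] graph_carrier[OF 2(2)]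
  have "((u1 \<oplus> u2) \<oplus> (v1 \<oplus> v2) \<otimes> b, (u1' \<oplus> u2') \<oplus> (v1' \<oplus> v2') \<otimes> b') \<in> adjoined"
    using adjoin_graphI[OF embedding_graph_add[OF graph 1(1) 2(1)] embedding_graph_add[OF graph 1(2) 2(2)]] .
  moreover have "x \<oplus> x2 = (u1 \<oplus> u2) \<oplus> (v1 \<oplus> v2) \<otimes> b" "y \<oplus> y2 = (u1' \<oplus> u2') \<oplus> (v1' \<oplus> v2') \<otimes> b'"
    unfolding 1 2 using c root(1) root'(1) by algebra+
  ultimately show ?thesis by simp
qed

lemma adjoined_mult:
  assumes "(x, y) \<in> adjoined" "(x2, y2) \<in> adjoined"
  shows "(x \<otimes> x2, y \<otimes> y2) \<in> adjoined"
proof -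
  obtain u1 u1' v1 v1' where 1: "(u1, u1') \<in> G" "(v1, v1') \<in> G"
    "x = u1 \<oplus> v1 \<otimes> b" "y = u1' \<oplus> v1' \<otimes> b'"
    using assms(1) by (rule adjoin_graphE)
  obtain u2 u2' v2 v2' where 2: "(u2, u2') \<in> G" "(v2, v2') \<in> G"
    "x2 = u2 \<oplus> v2 \<otimes> b" "y2 = u2' \<oplus> v2' \<otimes> b'"
    using assms(2) by (rule adjoin_graphE)
  note c = graph_carrier[OF 1(1)] graph_carrier[OF 1(2)] graph_carrier[OF 2(1)] graph_carrier[OF 2(2)]
  note add = embedding_graph_add[OF graph] and mult = embedding_graph_mult[OF graph]
  have "((u1 \<otimes> u2 \<oplus> v1 \<otimes> v2 \<otimes> a) \<oplus> (u1 \<otimes> v2 \<oplus> v1 \<otimes> u2) \<otimes> b,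
         (u1' \<otimes> u2' \<oplus> v1' \<otimes> v2' \<otimes> a') \<oplus> (u1' \<otimes> v2' \<oplus> v1' \<otimes> u2') \<otimes> b') \<in> adjoined"
    using adjoin_graphI[OF add[OF mult[OF 1(1) 2(1)] mult[OF mult[OF 1(2) 2(2)] radicand]]
        add[OF mult[OF 1(1) 2(2)] mult[OF 1(2) 2(1)]]] .
  moreover have "x \<otimes> x2 = (u1 \<otimes> u2 \<oplus> v1 \<otimes> v2 \<otimes> (b \<otimes> b)) \<oplus> (u1 \<otimes> v2 \<oplus> v1 \<otimes> u2) \<otimes> b"
    "y \<otimes> y2 = (u1' \<otimes> u2' \<oplus> v1' \<otimes> v2' \<otimes> (b' \<otimes> b')) \<oplus> (u1' \<otimes> v2' \<oplus> v1' \<otimes> u2') \<otimes> b'"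
    unfolding 1 2 using c root(1) root'(1) by algebra+
  ultimately show ?thesis unfolding root(2) root'(2) by simp
qed

lemma adjoined_uminus:
  assumes "(x, y) \<in> adjoined"
  shows "(\<ominus> x, \<ominus> y) \<in> adjoined"
proof -
  obtain u u' v v' where 1: "(u, u') \<in> G" "(v, v') \<in> G"
    "x = u \<oplus> v \<otimes> b" "y = u' \<oplus> v' \<otimes> b'"
    using assms by (rule adjoin_graphE)
  have "(\<ominus> u \<oplus> \<ominus> v \<otimes> b, \<ominus> u' \<oplus> \<ominus> v' \<otimes> b') \<in> adjoined"
    using adjoin_graphI[OF embedding_graph_uminus[OF graph 1(1)] embedding_graph_uminus[OF graph 1(2)]] .
  moreover have "\<ominus> x = \<ominus> u \<oplus> \<ominus> v \<otimes> b" "\<ominus> y = \<ominus> u' \<oplus> \<ominus> v' \<otimes> b'"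
    unfolding 1 using graph_carrier[OF 1(1)] graph_carrier[OF 1(2)] root(1) root'(1) by algebra+
  ultimately show ?thesis by simp
qed

lemma adjoined_inv:
  assumes "(x, y) \<in> adjoined" "x \<noteq> \<zero>"
  shows "(inv x, inv y) \<in> adjoined"
proof -
  obtain u u' v v' where 1: "(u, u') \<in> G" "(v, v') \<in> G"
    "x = u \<oplus> v \<otimes> b" "y = u' \<oplus> v' \<otimes> b'"
    using assms(1) by (rule adjoin_graphE)
  have c: "u \<in> carrier R" "u' \<in> carrier R" "v \<in> carrier R" "v' \<in> carrier R"
    using graph_carrier[OF 1(1)] graph_carrier[OF 1(2)] by simp_all
  note mult = embedding_graph_mult[OF graph]
  define N N' where "N = u \<otimes> u \<ominus> v \<otimes> v \<otimes> (b \<otimes> b)" and "N' = u' \<otimes> u' \<ominus> v' \<otimes> v' \<otimes> (b' \<otimes> b')"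
  have NG: "(N, N') \<in> G"
    unfolding N_def N'_def root(2) root'(2)
    using embedding_graph_minus[OF graph mult[OF 1(1) 1(1)] mult[OF mult[OF 1(2) 1(2)] radicand]] .
  have "u \<oplus> v \<otimes> b \<noteq> \<zero>" using assms(2) 1(3) by simp
  then have N: "N \<noteq> \<zero>"
    unfolding N_def by (rule adjoin_norm_nonzero[OF subfield_Domain_embedding_graph[OF graph] root(1,3)
        Domain.DomainI[OF 1(1)] Domain.DomainI[OF 1(2)]])
  have N': "N' \<noteq> \<zero>"
    using embedding_graph_nonzero[OF graph NG N] .
  have "(u \<otimes> inv N \<oplus> \<ominus> (v \<otimes> inv N) \<otimes> b, u' \<otimes> inv N' \<oplus> \<ominus> (v' \<otimes> inv N') \<otimes> b') \<in> adjoined"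
    using adjoin_graphI[OF mult[OF 1(1) embedding_graph_inv[OF graph NG N]]
        embedding_graph_uminus[OF graph mult[OF 1(2) embedding_graph_inv[OF graph NG N]]]] .
  moreover have "inv x = u \<otimes> inv N \<oplus> \<ominus> (v \<otimes> inv N) \<otimes> b"
    unfolding 1(3) N_def using inv_add_mult_conj[OF c(1,3) root(1) N[unfolded N_def]] .
  moreover have "inv y = u' \<otimes> inv N' \<oplus> \<ominus> (v' \<otimes> inv N') \<otimes> b'"
    unfolding 1(4) N'_def using inv_add_mult_conj[OF c(2,4) root'(1) N'[unfolded N'_def]] .
  ultimately show ?thesis by simp
qed

end

lemma (in field) embedding_graph_adjoin:
  assumes "embedding_graph R G" "(a, a') \<in> G"
    and "b \<in> carrier R" "b \<otimes> b = a" "b \<notin> Domain G" "b' \<in> carrier R" "b' \<otimes> b' = a'"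
  shows "embedding_graph R (adjoin_graph R G b b')"
proof -
  interpret sqrt_adjunction R G a a' b b'
    using assms by unfold_locales
  show ?thesis
    unfolding embedding_graph_def single_valued_def
  proof (intro conjI allI impI)
    show "adjoined \<subseteq> carrier R \<times> carrier R"
      using adjoined_carrier by (intro subrelI) simp
    show "(\<one>, \<one>) \<in> adjoined"
      using subset_adjoin_graph[OF graph root(1) root'(1)] embedding_graph_one[OF graph] by (rule subsetD)
  qed (fact adjoined_single_valued adjoined_add adjoined_mult adjoined_uminus adjoined_inv)+
qed

section \<open>Polynomials and algebraic elements\<close>

definition poly_of_roots :: "('a, 'b) ring_scheme \<Rightarrow> 'a set \<Rightarrow> 'a list" where
  "poly_of_roots R A = finprod (poly_ring R) (\<lambda>z. [\<one>\<^bsub>R\<^esub>, \<ominus>\<^bsub>R\<^esub> z]) A"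

lemma map_poly_ring_hom:
  assumes h: "h \<in> ring_hom R S" and R: "field R" and S: "field S"
  shows "map h \<in> ring_hom (poly_ring R) (poly_ring S)"
proof -
  interpret ring_hom_ring R S h
    using ring_hom_ringI2[OF field.is_ring[OF R] field.is_ring[OF S] h] .
  have closed: "map h p \<in> carrier (poly_ring S)" if "p \<in> carrier (poly_ring R)" for p
    using polynomial_hom[OF h R S that] .
  have coeffs: "set p \<subseteq> carrier R" if "p \<in> carrier (poly_ring R)" for p
    using that R.polynomial_incl unfolding sym[OF univ_poly_carrier] by blast
  have normalized: "S.normalize (map h p) = map h p" if "p \<in> carrier (poly_ring R)" for p
    using S.normalize_polynomial closed[OF that] unfolding sym[OF univ_poly_carrier] by blast
  interpret FR: field R using R .
  interpret UP: ring "poly_ring R" using FR.univ_poly_is_ring[OF R.carrier_is_subring] .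
  show ?thesis
  proof (rule ring_hom_memI)
    fix p q assume pq: "p \<in> carrier (poly_ring R)" "q \<in> carrier (poly_ring R)"
    show "map h (p \<otimes>\<^bsub>poly_ring R\<^esub> q) = map h p \<otimes>\<^bsub>poly_ring S\<^esub> map h q"
      using poly_mult_hom'[OF coeffs[OF pq(1)] coeffs[OF pq(2)]] normalized[OF UP.m_closed[OF pq]]
      unfolding univ_poly_mult by simp
    show "map h (p \<oplus>\<^bsub>poly_ring R\<^esub> q) = map h p \<oplus>\<^bsub>poly_ring S\<^esub> map h q"
      using poly_add_hom'[OF coeffs[OF pq(1)] coeffs[OF pq(2)]] normalized[OF UP.a_closed[OF pq]]
      unfolding univ_poly_add by simp
  qed (simp_all add: closed univ_poly_one)
qed

context field
begin

lemma linear_poly_closed: "z \<in> carrier R \<Longrightarrow> [\<one>, \<ominus> z] \<in> carrier (poly_ring R)"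
  unfolding sym[OF univ_poly_carrier] polynomial_def by auto

lemma poly_of_roots_closed:
  assumes "A \<subseteq> carrier R"
  shows "poly_of_roots R A \<in> carrier (poly_ring R)"
proof -
  interpret UP: cring "poly_ring R" using univ_poly_is_cring[OF carrier_is_subring] .
  show ?thesis
    unfolding poly_of_roots_def using assms linear_poly_closed by (intro UP.finprod_closed) auto
qed

lemma degree_poly_of_roots:
  assumes "finite A" "A \<subseteq> carrier R"
  shows "poly_of_roots R A \<noteq> [] \<and> degree (poly_of_roots R A) = card A"
  using assms
proof (induction A rule: finite_induct)
  interpret UP: cring "poly_ring R" using univ_poly_is_cring[OF carrier_is_subring] .
  case empty
  show ?case unfolding poly_of_roots_def by (simp add: univ_poly_one)
next
  interpret UP: cring "poly_ring R" using univ_poly_is_cring[OF carrier_is_subring] .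
  case (insert a A)
  have "poly_of_roots R (insert a A) = [\<one>, \<ominus> a] \<otimes>\<^bsub>poly_ring R\<^esub> poly_of_roots R A"
    unfolding poly_of_roots_def
    using insert linear_poly_closed by (intro UP.finprod_insert) auto
  moreover have "degree (poly_mult [\<one>, \<ominus> a] (poly_of_roots R A)) = Suc (degree (poly_of_roots R A))"
    using poly_mult_degree_eq[OF carrier_is_subring, of "[\<one>, \<ominus> a]" "poly_of_roots R A"]
      linear_poly_closed[of a] poly_of_roots_closed[of A] insert
    unfolding sym[OF univ_poly_carrier] by simp
  ultimately show ?case using insert by (auto simp: univ_poly_mult)
qed

lemma poly_of_roots_root:
  assumes "finite A" "A \<subseteq> carrier R" "a \<in> A"
  shows "eval (poly_of_roots R A) a = \<zero>"
proof -
  interpret UP: cring "poly_ring R" using univ_poly_is_cring[OF carrier_is_subring] .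
  have a: "a \<in> carrier R" using assms by blast
  have q: "poly_of_roots R (A - {a}) \<in> carrier (poly_ring R)"
    using poly_of_roots_closed assms(2) by blast
  have "poly_of_roots R A = poly_of_roots R (insert a (A - {a}))"
    using assms(3) by (simp add: insert_absorb)
  also have "\<dots> = [\<one>, \<ominus> a] \<otimes>\<^bsub>poly_ring R\<^esub> poly_of_roots R (A - {a})"
    unfolding poly_of_roots_def
    using assms linear_poly_closed by (intro UP.finprod_insert) auto
  finally have "eval (poly_of_roots R A) a = eval [\<one>, \<ominus> a] a \<otimes> eval (poly_of_roots R (A - {a})) a"
    using ring_hom_mult[OF eval_is_hom[OF carrier_is_subring a] linear_poly_closed[OF a] q] by simp
  moreover have "eval [\<one>, \<ominus> a] a = \<zero>" using a by simp algebra
  moreover have "eval (poly_of_roots R (A - {a})) a \<in> carrier R"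
    using ring_hom_closed[OF eval_is_hom[OF carrier_is_subring a] q] .
  ultimately show ?thesis by simp
qed

lemma map_poly_of_roots:
  assumes s: "s \<in> ring_iso R R" and "A \<subseteq> carrier R"
  shows "map s (poly_of_roots R A) = poly_of_roots R (s ` A)"
proof -
  interpret UP: cring "poly_ring R" using univ_poly_is_cring[OF carrier_is_subring] .
  have hom: "ring_hom_cring (poly_ring R) (poly_ring R) (map s)"
    using map_poly_ring_hom[of s R R] s field_axioms UP.cring_axioms
    by (intro ring_hom_cringI) (auto simp: ring_iso_def)
  interpret H: ring_hom_ring R R s
    using s ring_axioms by (intro ring_hom_ringI2) (auto simp: ring_iso_def)
  have inj: "inj_on s A"
    using s assms(2) unfolding ring_iso_def bij_betw_def by (blast intro: inj_on_subset)
  have "map s (poly_of_roots R A) = finprod (poly_ring R) (map s \<circ> (\<lambda>z. [\<one>, \<ominus> z])) A"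
    unfolding poly_of_roots_def
    using assms(2) linear_poly_closed by (intro ring_hom_cring.hom_finprod[OF hom]) auto
  also have "\<dots> = finprod (poly_ring R) (\<lambda>z. [\<one>, \<ominus> s z]) A"
    using assms(2) linear_poly_closed by (intro UP.finprod_cong') auto
  also have "\<dots> = poly_of_roots R (s ` A)"
  proof -
    have "(\<lambda>z. [\<one>, \<ominus> z]) \<in> s ` A \<rightarrow> carrier (poly_ring R)"
      using assms(2) linear_poly_closed by auto
    then show ?thesis unfolding poly_of_roots_def using UP.finprod_reindex[OF _ inj] by simp
  qed
  finally show ?thesis .
qed

lemma finite_card_le_degree_if_roots:
  assumes p: "p \<in> carrier (poly_ring R)" "p \<noteq> []"
    and A: "A \<subseteq> carrier R" "\<And>a. a \<in> A \<Longrightarrow> eval p a = \<zero>"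
  shows "finite A \<and> card A \<le> degree p"
proof -
  have "A \<subseteq> set_mset (roots p)"
    using A p roots_mem_iff_is_root[OF p(1)] unfolding is_root_def by blast
  then have "finite A \<and> card A \<le> card (set_mset (roots p))"
    by (simp add: card_mono finite_subset)
  moreover have "card (set_mset (roots p)) \<le> size (roots p)"
    by (metis card_length ex_mset set_mset_mset size_mset)
  ultimately show ?thesis using size_roots_le_degree[OF p(1)] by linarith
qed

lemma algebraic_sqrt:
  assumes K: "subfield K R" and x: "x \<in> carrier R" "(algebraic over K) x"
    and y: "y \<in> carrier R" "y \<otimes> y = x"
  shows "(algebraic over K) y"
proof -
  let ?Kx = "simple_extension K x"
  have Kx: "subfield ?Kx R" using simple_extension_is_subfield[OF K x(1)] x(2) by simp
  have "[\<one>, \<zero>, \<ominus> x] \<in> carrier (?Kx[X])"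
    using subringE(2,3,5)[OF subfieldE(1)[OF Kx]] simple_extension_mem[OF subfieldE(1)[OF K] x(1)]
    unfolding sym[OF univ_poly_carrier] polynomial_def by auto
  moreover have "eval [\<one>, \<zero>, \<ominus> x] y = \<zero>"
    using x(1) y by (simp add: numeral_2_eq_2) algebra
  ultimately have "(algebraic over ?Kx) y" using algebraicI by fastforce
  then have "finite_dimension ?Kx (simple_extension ?Kx y)"
    using finite_dimension_simple_extension[OF Kx y(1)] by simp
  then have "finite_dimension K (simple_extension ?Kx y)"
    using telescopic_base_dim(1)[OF K Kx] finite_dimension_simple_extension[OF K x(1)] x(2) by simp
  then show ?thesis
    using finite_dimension_imp_algebraic[OF K simple_extension_is_subring[OF subfieldE(1)[OF Kx] y(1)]]
      simple_extension_mem[OF subfieldE(1)[OF Kx] y(1)] by auto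
qed

end

section \<open>Automorphisms over a subfield\<close>

definition aut_over :: "('a, 'b) ring_scheme \<Rightarrow> 'a set \<Rightarrow> ('a \<Rightarrow> 'a) set" where
  "aut_over R F = {s \<in> ring_iso R R. \<forall>a\<in>F. s a = a}"

context field
begin

lemma ring_iso_hom_ring: "s \<in> ring_iso R R \<Longrightarrow> ring_hom_ring R R s"
  using ring_axioms by (intro ring_hom_ringI2) (auto simp: ring_iso_def)

lemma ring_iso_inv_into:
  assumes "s \<in> ring_iso R R"
  shows "inv_into (carrier R) s \<in> ring_iso R R"
    and "x \<in> carrier R \<Longrightarrow> inv_into (carrier R) s (s x) = x"
    and "x \<in> carrier R \<Longrightarrow> s (inv_into (carrier R) s x) = x"
  using ring_iso_set_sym[OF ring_axioms assms] assms
  unfolding ring_iso_def bij_betw_def by (auto simp: f_inv_into_f)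

lemma ring_iso_inv_into_image:
  assumes "s \<in> ring_iso R R" "A \<subseteq> carrier R" "s ` A = A"
  shows "inv_into (carrier R) s ` A = A"
proof -
  have "inj_on s (carrier R)" using assms(1) unfolding ring_iso_def bij_betw_def by simp
  then show ?thesis using inv_into_image_cancel[OF _ assms(2)] assms(3) by metis
qed

lemma ring_iso_image_eqI:
  assumes "s \<in> ring_iso R R" "A \<subseteq> carrier R"
    and "s ` A \<subseteq> A" "inv_into (carrier R) s ` A \<subseteq> A"
  shows "s ` A = A"
proof (rule equalityI[OF assms(3)], rule subsetI)
  fix z assume "z \<in> A"
  then have "z = s (inv_into (carrier R) s z)" "inv_into (carrier R) s z \<in> A"
    using assms ring_iso_inv_into(3)[OF assms(1)] by auto
  then show "z \<in> s ` A" by (rule image_eqI)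
qed

lemma aut_over_iso: "s \<in> aut_over R F \<Longrightarrow> s \<in> ring_iso R R"
  and aut_over_fixed: "s \<in> aut_over R F \<Longrightarrow> a \<in> F \<Longrightarrow> s a = a"
  unfolding aut_over_def by auto

lemma id_in_aut_over: "id \<in> aut_over R F"
  unfolding aut_over_def using ring_iso_set_refl by auto

lemma aut_over_comp:
  assumes "s \<in> aut_over R F" "t \<in> aut_over R F"
  shows "s \<circ> t \<in> aut_over R F"
  using ring_iso_set_trans[OF aut_over_iso[OF assms(2)] aut_over_iso[OF assms(1)]]
    aut_over_fixed[OF assms(1)] aut_over_fixed[OF assms(2)]
  unfolding aut_over_def by simp

lemma aut_over_inv_into:
  assumes "F \<subseteq> carrier R" "s \<in> aut_over R F"
  shows "inv_into (carrier R) s \<in> aut_over R F"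
  unfolding aut_over_def
proof (intro CollectI conjI ballI)
  show "inv_into (carrier R) s \<in> ring_iso R R"
    using ring_iso_inv_into(1)[OF aut_over_iso[OF assms(2)]] .
  fix a assume "a \<in> F"
  then have "s a = a" "a \<in> carrier R" using aut_over_fixed[OF assms(2)] assms(1) by auto
  then show "inv_into (carrier R) s a = a"
    using ring_iso_inv_into(2)[OF aut_over_iso[OF assms(2)]] by metis
qed

lemma aut_over_image_eqI:
  assumes "F \<subseteq> carrier R" "A \<subseteq> carrier R" "\<And>s. s \<in> aut_over R F \<Longrightarrow> s ` A \<subseteq> A"
    and "s \<in> aut_over R F"
  shows "s ` A = A"
  using ring_iso_image_eqI[OF aut_over_iso[OF assms(4)] assms(2) assms(3)[OF assms(4)]
      assms(3)[OF aut_over_inv_into[OF assms(1,4)]]] .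

lemma aut_over_eval:
  assumes "subfield F R" "s \<in> aut_over R F" "p \<in> carrier (F[X])" "x \<in> carrier R"
  shows "eval p (s x) = s (eval p x)"
proof -
  interpret ring_hom_ring R R s using ring_iso_hom_ring[OF aut_over_iso[OF assms(2)]] .
  have "set p \<subseteq> F" using assms(3) polynomial_incl unfolding sym[OF univ_poly_carrier] by blast
  then have "map s p = p" using aut_over_fixed[OF assms(2)] by (induct p) auto
  then show ?thesis using eval_hom[OF subfieldE(1)[OF assms(1)] assms(4,3)] by simp
qed

section \<open>Transport of extensions along automorphisms\<close>

lemma quadratic_ext_relation:
  assumes L: "quadratic_ext R F L" and z: "z \<in> L" "z \<notin> F"
  obtains k w where "k \<in> F" "w \<in> F" "z \<otimes> z = k \<otimes> z \<oplus> w"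
proof -
  have F: "subfield F R" and Ls: "subfield L R" and dim: "dimension 2 F L"
    using L unfolding quadratic_ext_def by auto
  have zc: "z \<in> carrier R" using z(1) subfieldE(3)[OF Ls] by blast
  have Span_one: "Span F [\<one>] \<subseteq> F"
  proof
    fix u assume "u \<in> Span F [\<one>]"
    then have "u \<in> line_extension F \<one> {\<zero>}" by simp
    then obtain k where "k \<in> F" "u = k \<otimes> \<one> \<oplus> \<zero>"
      unfolding line_extension_mem_iff by blast
    then show "u \<in> F" using subfieldE(3)[OF F] by auto
  qed
  have "independent F [z, \<one>]"
  proof (rule li_Cons[OF zc _ li_Cons])
    show "z \<notin> Span F [\<one>]" using Span_one z(2) by blast
  qed simp_all
  moreover have "set [z, \<one>] \<subseteq> L"
    using z(1) subringE(3)[OF subfieldE(1)[OF Ls]] by simp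
  ultimately have "Span F [z, \<one>] = L"
    using independent_length_eq_dimension[OF F dim, of "[z, \<one>]"] by simp
  then have "z \<otimes> z \<in> line_extension F z (Span F [\<one>])"
    using subringE(6)[OF subfieldE(1)[OF Ls] z(1) z(1)] by simp
  then obtain k w where "k \<in> F" "w \<in> Span F [\<one>]" "z \<otimes> z = k \<otimes> z \<oplus> w"
    unfolding line_extension_mem_iff by blast
  then show ?thesis using that Span_one by blast
qed

lemma aut_over_quadratic_root:
  assumes s: "s \<in> aut_over R F" and F: "F \<subseteq> carrier R"
    and kw: "k \<in> F" "w \<in> F" and z: "z \<in> carrier R" "z \<otimes> z = k \<otimes> z \<oplus> w"
  shows "s z = z \<or> s z = k \<ominus> z"
proof -
  interpret ring_hom_ring R R s using ring_iso_hom_ring[OF aut_over_iso[OF s]] .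
  have c: "k \<in> carrier R" "w \<in> carrier R" "s z \<in> carrier R" using kw F z(1) by auto
  have "s z \<otimes> s z = k \<otimes> s z \<oplus> w"
    using z c hom_mult[of z z] aut_over_fixed[OF s] kw by simp
  then have "(s z \<ominus> z) \<otimes> (s z \<ominus> (k \<ominus> z)) = \<zero>"
    using z c by algebra
  then have "s z \<ominus> z = \<zero> \<or> s z \<ominus> (k \<ominus> z) = \<zero>"
    using integral_iff c z(1) by simp
  moreover have "s z = (s z \<ominus> z) \<oplus> z" "s z = (s z \<ominus> (k \<ominus> z)) \<oplus> (k \<ominus> z)"
    using c z(1) by algebra+
  ultimately show ?thesis using c z(1) by auto
qed

lemma quadratic_ext_aut_over_image:
  assumes L: "quadratic_ext R F L" and s: "s \<in> aut_over R F"
  shows "s ` L \<subseteq> L"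
proof (rule image_subsetI)
  fix z assume z: "z \<in> L"
  have F: "F \<subseteq> carrier R" and Ls: "subfield L R" and FL: "F \<subseteq> L"
    using L subfieldE(3) unfolding quadratic_ext_def by auto
  show "s z \<in> L"
  proof (cases "z \<in> F")
    case True
    then show ?thesis using aut_over_fixed[OF s] FL by auto
  next
    case False
    then obtain k w where kw: "k \<in> F" "w \<in> F" "z \<otimes> z = k \<otimes> z \<oplus> w"
      using quadratic_ext_relation[OF L z] by blast
    have "\<ominus> z \<in> L" using subringE(5)[OF subfieldE(1)[OF Ls] z] .
    then have "k \<ominus> z \<in> L"
      unfolding a_minus_def using subringE(7)[OF subfieldE(1)[OF Ls]] kw(1) FL by blast
    moreover have "z \<in> carrier R" using z subfieldE(3)[OF Ls] by blast
    ultimately show ?thesis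
      using aut_over_quadratic_root[OF s F kw(1,2) _ kw(3)] z by auto
  qed
qed

lemma quadratic_ext_image:
  assumes s: "s \<in> ring_iso R R" and sK: "s ` K = K" and M: "quadratic_ext R K M"
  shows "quadratic_ext R K (s ` M)"
proof -
  interpret ring_hom_ring R R s using ring_iso_hom_ring[OF s] .
  have K: "subfield K R" and Ms: "subfield M R" and KM: "K \<subseteq> M" and dim: "dimension 2 K M"
    using M unfolding quadratic_ext_def by auto
  have "inj_on s M"
    using s subfieldE(3)[OF Ms] unfolding ring_iso_def bij_betw_def by (blast intro: inj_on_subset)
  then have "dimension 2 K (s ` M)"
    using inj_hom_dimension[OF K one_not_zero _ dim] sK by simp
  moreover have "K \<subseteq> s ` M" using image_mono[OF KM, of s] sK by simp
  ultimately show ?thesis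
    unfolding quadratic_ext_def using K img_is_subfield(2)[OF Ms one_not_zero] by simp
qed

lemma poly_ring_carrier_if_subfield:
  "subfield K R \<Longrightarrow> p \<in> carrier (K[X]) \<Longrightarrow> p \<in> carrier (poly_ring R)"
  using carrier_polynomial[OF subfieldE(1)] unfolding sym[OF univ_poly_carrier] by blast

lemma Irr_image_pdivides:
  assumes K: "subfield K R" and s: "s \<in> ring_iso R R" "s ` K = K"
    and z: "z \<in> carrier R" "(algebraic over K) z"
  shows "(algebraic over K) (s z)" and "Irr K (s z) pdivides map s (Irr K z)"
proof -
  interpret ring_hom_ring R R s using ring_iso_hom_ring[OF s(1)] .
  have p: "map s (Irr K z) \<in> carrier (K[X])"
    using subfield_polynomial_hom[OF K one_not_zero IrrE(1)[OF K z]] s(2) by simp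
  have "Irr K z \<noteq> []" using pirreducible_degree[OF K IrrE(1,2)[OF K z]] by auto
  then have ne: "map s (Irr K z) \<noteq> []" by simp
  have root: "eval (map s (Irr K z)) (s z) = \<zero>"
    using eval_hom[OF subfieldE(1)[OF K] z(1) IrrE(1)[OF K z]] IrrE(4)[OF K z] by simp
  show alg: "(algebraic over K) (s z)" using algebraicI[OF p ne root] .
  show "Irr K (s z) pdivides map s (Irr K z)" using Irr_minimal[OF K _ alg p root] z(1) by simp
qed

lemma degree_Irr_image_le:
  assumes K: "subfield K R" and s: "s \<in> ring_iso R R" "s ` K = K"
    and z: "z \<in> carrier R" "(algebraic over K) z"
  shows "degree (Irr K (s z)) \<le> degree (Irr K z)"
proof -
  interpret ring_hom_ring R R s using ring_iso_hom_ring[OF s(1)] .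
  have sz: "s z \<in> carrier R" using z(1) by simp
  have p: "map s (Irr K z) \<in> carrier (K[X])"
    using subfield_polynomial_hom[OF K one_not_zero IrrE(1)[OF K z]] s(2) by simp
  have ne: "map s (Irr K z) \<noteq> []" using pirreducible_degree[OF K IrrE(1,2)[OF K z]] by auto
  have "degree (Irr K (s z)) \<le> degree (map s (Irr K z))"
    using pdivides_imp_degree_le[OF subfieldE(1)[OF K] IrrE(1)[OF K sz Irr_image_pdivides(1)[OF K s z]] p ne
        Irr_image_pdivides(2)[OF K s z]] .
  then show ?thesis by simp
qed

lemma
  assumes K: "subfield K R" and s: "s \<in> ring_iso R R" "s ` K = K"
    and z: "z \<in> carrier R" "(algebraic over K) z"
  shows degree_Irr_image: "degree (Irr K (s z)) = degree (Irr K z)"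
    and Irr_image_root: "r \<in> carrier R \<Longrightarrow> eval (Irr K z) r = \<zero> \<Longrightarrow> eval (Irr K (s z)) (s r) = \<zero>"
proof -
  interpret ring_hom_ring R R s using ring_iso_hom_ring[OF s(1)] .
  define t where "t = inv_into (carrier R) s"
  have t: "t \<in> ring_iso R R" "t ` K = K" "t (s z) = z"
    unfolding t_def using ring_iso_inv_into[OF s(1)] ring_iso_inv_into_image[OF s(1) subfieldE(3)[OF K] s(2)]
      z(1) by auto
  have sz: "s z \<in> carrier R" "(algebraic over K) (s z)" using z(1) Irr_image_pdivides(1)[OF K s z] by auto
  show "degree (Irr K (s z)) = degree (Irr K z)"
    using degree_Irr_image_le[OF K s z] degree_Irr_image_le[OF K t(1,2) sz] t(3) by simp
  assume r: "r \<in> carrier R" "eval (Irr K z) r = \<zero>"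
  let ?q = "Irr K (s z)"
  have q: "?q \<in> carrier (K[X])" using IrrE(1)[OF K sz] .
  have "Irr K z pdivides map t ?q" using Irr_image_pdivides(2)[OF K t(1,2) sz] t(3) by simp
  then have "eval (map t ?q) r = \<zero>"
    using pdivides_imp_root_sharing[OF poly_ring_carrier_if_subfield[OF K IrrE(1)[OF K z]] _ r] by simp
  moreover have "map t ?q \<in> carrier (K[X])"
    using ring_hom_ring.subfield_polynomial_hom[OF ring_iso_hom_ring[OF t(1)] K one_not_zero q] t(2) by simp
  ultimately have "eval (map s (map t ?q)) (s r) = \<zero>"
    using eval_hom[OF subfieldE(1)[OF K] r(1)] by (metis hom_zero)
  moreover have "map s (map t ?q) = ?q"
  proof -
    have "set ?q \<subseteq> carrier R"
      using q polynomial_incl subfieldE(3)[OF K] unfolding sym[OF univ_poly_carrier] by blast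
    then have "map (s \<circ> t) ?q = ?q"
      using ring_iso_inv_into(3)[OF s(1)] unfolding t_def by (intro map_idI) auto
    then show ?thesis by simp
  qed
  ultimately show "eval ?q (s r) = \<zero>" by simp
qed

lemma galois_ext_image:
  assumes s: "s \<in> ring_iso R R" "s ` K = K" and M: "galois_ext R K M"
  shows "galois_ext R K (s ` M)"
proof -
  interpret ring_hom_ring R R s using ring_iso_hom_ring[OF s(1)] .
  have K: "subfield K R" and Ms: "subfield M R" and KM: "K \<subseteq> M"
    using M unfolding galois_ext_def by auto
  have inj: "inj_on s M"
    using s(1) subfieldE(3)[OF Ms] unfolding ring_iso_def bij_betw_def by (blast intro: inj_on_subset)
  have "algebraic K (s z) \<and> (\<exists>rs. distinct rs \<and> set rs \<subseteq> s ` M \<and>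
      length rs = degree (Irr K (s z)) \<and> (\<forall>r\<in>set rs. eval (Irr K (s z)) r = \<zero>))" if z: "z \<in> M" for z
  proof -
    obtain rs where alg: "(algebraic over K) z" and rs: "distinct rs" "set rs \<subseteq> M"
      "length rs = degree (Irr K z)" "\<forall>r\<in>set rs. eval (Irr K z) r = \<zero>"
      using M z unfolding galois_ext_def over_def by blast
    have zc: "z \<in> carrier R" using z subfieldE(3)[OF Ms] by blast
    have "distinct (map s rs)" using rs(1,2) inj by (simp add: distinct_map inj_on_subset)
    moreover have "set (map s rs) \<subseteq> s ` M" using rs(2) by auto
    moreover have "length (map s rs) = degree (Irr K (s z))"
      using rs(3) degree_Irr_image[OF K s zc alg] by simp
    moreover have "\<forall>r\<in>set (map s rs). eval (Irr K (s z)) r = \<zero>"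
      using rs(2,4) Irr_image_root[OF K s zc alg] subfieldE(3)[OF Ms] by auto
    moreover have "algebraic K (s z)" using Irr_image_pdivides(1)[OF K s zc alg] by (simp add: over_def)
    ultimately show ?thesis by blast
  qed
  moreover have "K \<subseteq> s ` M" using image_mono[OF KM, of s] s(2) by simp
  ultimately show ?thesis
    unfolding galois_ext_def using K img_is_subfield(2)[OF Ms one_not_zero] by blast
qed

lemma generate_field_image_subset:
  assumes s: "s \<in> ring_hom R R" and H: "H \<subseteq> carrier R"
  shows "generate_field R (s ` H) \<subseteq> s ` generate_field R H"
proof -
  interpret ring_hom_ring R R s using ring_hom_ringI2[OF ring_axioms ring_axioms s] .
  have "s ` H \<subseteq> carrier R" using H by auto
  moreover have "subfield (s ` generate_field R H) R"
    using img_is_subfield(2)[OF generate_field_is_subfield[OF H] one_not_zero] .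
  moreover have "s ` H \<subseteq> s ` generate_field R H"
    using generate_field.incl[of _ H R] by blast
  ultimately show ?thesis by (rule generate_field_min_subfield1)
qed

lemma generate_field_image:
  assumes s: "s \<in> ring_iso R R" and H: "H \<subseteq> carrier R"
  shows "s ` generate_field R H = generate_field R (s ` H)"
proof
  define t where "t = inv_into (carrier R) s"
  have bij: "bij_betw s (carrier R) (carrier R)" using s unfolding ring_iso_def by simp
  have sH: "s ` H \<subseteq> carrier R" using H bij unfolding bij_betw_def by blast
  have "t ` s ` H = H"
    unfolding t_def using inv_into_image_cancel[OF bij_betw_imp_inj_on[OF bij] H] .
  then have "generate_field R H \<subseteq> t ` generate_field R (s ` H)"
    using generate_field_image_subset[OF _ sH, of t] ring_iso_inv_into(1)[OF s]
    unfolding t_def ring_iso_def by simp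
  then have "s ` generate_field R H \<subseteq> s ` t ` generate_field R (s ` H)" by (rule image_mono)
  also have "\<dots> = generate_field R (s ` H)"
    unfolding t_def using image_inv_into_cancel[OF _ generate_field_incl[OF sH]] bij
    unfolding bij_betw_def by blast
  finally show "s ` generate_field R H \<subseteq> generate_field R (s ` H)" .
  show "generate_field R (s ` H) \<subseteq> s ` generate_field R H"
    using generate_field_image_subset[OF _ H] s unfolding ring_iso_def by simp
qed

lemma tower_step_carrier:
  assumes "T \<subseteq> carrier R"
  shows "T \<union> \<Union>{M. quadratic_ext R T M \<and> galois_ext R K M} \<subseteq> carrier R"
proof -
  have "M \<subseteq> carrier R" if "quadratic_ext R T M" for M
    using that subfieldE(3) unfolding quadratic_ext_def by blast
  then show ?thesis using assms by blast
qed

lemma subfield_tower_aux: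
  assumes "subfield K R"
  shows "subfield (tower_aux R K n) R"
proof (induction n)
  case 0
  then show ?case using assms by simp
next
  case (Suc n)
  then show ?case
    using generate_field_is_subfield[OF tower_step_carrier[OF subfieldE(3)[OF Suc.IH]]] by simp
qed

lemma subset_tower_aux: "K \<subseteq> tower_aux R K n"
proof (induction n)
  case (Suc n)
  have "tower_aux R K n \<subseteq> tower_aux R K (Suc n)"
    by (auto intro: generate_field.incl)
  then show ?case using Suc.IH by (rule order_trans[rotated])
qed simp

lemma tower_step_image_subset:
  assumes t: "t \<in> ring_iso R R" "t ` K = K" "t ` T = T"
  shows "t ` (T \<union> \<Union>{M. quadratic_ext R T M \<and> galois_ext R K M}) \<subseteq>
           T \<union> \<Union>{M. quadratic_ext R T M \<and> galois_ext R K M}"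
proof (rule image_subsetI)
  fix h assume h: "h \<in> T \<union> \<Union>{M. quadratic_ext R T M \<and> galois_ext R K M}"
  show "t h \<in> T \<union> \<Union>{M. quadratic_ext R T M \<and> galois_ext R K M}"
  proof (cases "h \<in> T")
    case True
    then have "t h \<in> T" using t(3) by blast
    then show ?thesis by (rule UnI1)
  next
    case False
    then obtain M where M: "quadratic_ext R T M" "galois_ext R K M" "h \<in> M" using h by blast
    have "quadratic_ext R T (t ` M)" "galois_ext R K (t ` M)"
      using quadratic_ext_image[OF t(1,3) M(1)] galois_ext_image[OF t(1,2) M(2)] .
    then have "t ` M \<in> {M. quadratic_ext R T M \<and> galois_ext R K M}" by simp
    then show ?thesis using imageI[OF M(3), of t] by (intro UnI2 UnionI)
  qed
qed

lemma tower_aux_image: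
  assumes K: "subfield K R"
  shows "s \<in> ring_iso R R \<Longrightarrow> s ` K = K \<Longrightarrow> s ` tower_aux R K n = tower_aux R K n"
proof (induction n arbitrary: s)
  case 0
  then show ?case by simp
next
  case (Suc n)
  define T where "T = tower_aux R K n"
  define H where "H = T \<union> \<Union>{M. quadratic_ext R T M \<and> galois_ext R K M}"
  have "T \<subseteq> carrier R" unfolding T_def using subfieldE(3)[OF subfield_tower_aux[OF K]] .
  then have H: "H \<subseteq> carrier R" unfolding H_def by (rule tower_step_carrier)
  have step: "t ` H \<subseteq> H" if "t \<in> ring_iso R R" "t ` K = K" for t
    unfolding H_def T_def using tower_step_image_subset[OF that Suc.IH[OF that]] .
  have "s ` H = H"
    using ring_iso_image_eqI[OF Suc.prems(1) H step[OF Suc.prems]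
        step[OF ring_iso_inv_into(1)[OF Suc.prems(1)]
          ring_iso_inv_into_image[OF Suc.prems(1) subfieldE(3)[OF K] Suc.prems(2)]]] .
  then show ?case
    using generate_field_image[OF Suc.prems(1) H] unfolding H_def T_def by simp
qed

end

section \<open>Automorphisms of a quadratic closure\<close>

locale quadratic_closure_field = field R for R (structure) + fixes F :: "'a set"
  assumes quadratic_closure: "quadratic_closure R F"
begin

lemma subfield_F: "subfield F R"
  using quadratic_closure unfolding quadratic_closure_def by blast

lemma F_carrier: "F \<subseteq> carrier R"
  using subfieldE(3)[OF subfield_F] .

lemma square_root_exists: "x \<in> carrier R \<Longrightarrow> \<exists>y\<in>carrier R. y \<otimes> y = x"
  using quadratic_closure unfolding quadratic_closure_def sq_closed_set_def by blast

lemma sq_closed_subfield_eq_carrier: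
  "subfield K R \<Longrightarrow> F \<subseteq> K \<Longrightarrow> sq_closed_set R K \<Longrightarrow> K = carrier R"
  using quadratic_closure unfolding quadratic_closure_def by blast

lemma proper_subfield_nonsquare:
  assumes "subfield K R" "F \<subseteq> K" "K \<noteq> carrier R"
  obtains a where "a \<in> K" "\<And>y. y \<in> K \<Longrightarrow> y \<otimes> y \<noteq> a"
  using sq_closed_subfield_eq_carrier[OF assms(1,2)] assms(3) unfolding sq_closed_set_def by blast

lemma endomorphism_over_F_in_aut_over:
  assumes hom: "s \<in> ring_hom R R" and fixed: "\<And>a. a \<in> F \<Longrightarrow> s a = a"
  shows "s \<in> aut_over R F"
proof -
  interpret ring_hom_ring R R s using ring_hom_ringI2[OF ring_axioms ring_axioms hom] .
  have "s ` carrier R = carrier R"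
  proof (rule sq_closed_subfield_eq_carrier)
    show "subfield (s ` carrier R) R"
      using img_is_subfield(2)[OF carrier_is_subfield one_not_zero] .
    show "F \<subseteq> s ` carrier R"
    proof
      fix a assume "a \<in> F"
      then have "a = s a" "a \<in> carrier R" using fixed F_carrier by auto
      then show "a \<in> s ` carrier R" by (rule image_eqI)
    qed
    show "sq_closed_set R (s ` carrier R)"
      unfolding sq_closed_set_def
    proof
      fix y assume "y \<in> s ` carrier R"
      then obtain x where x: "x \<in> carrier R" "y = s x" by blast
      then obtain z where z: "z \<in> carrier R" "z \<otimes> z = x" using square_root_exists by blast
      then have "s z \<otimes> s z = y" using x hom_mult[of z z] by simp
      then show "\<exists>w\<in>s ` carrier R. w \<otimes> w = y" using z(1) by blast
    qed
  qed
  then have "bij_betw s (carrier R) (carrier R)"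
    using non_trivial_field_hom_is_inj[OF hom field_axioms field_axioms] unfolding bij_betw_def by blast
  then show ?thesis unfolding aut_over_def ring_iso_def using hom fixed by blast
qed

lemma total_embedding_graph_aut:
  assumes G: "embedding_graph R G" and F: "Id_on F \<subseteq> G" and total: "Domain G = carrier R"
  shows "\<exists>s\<in>aut_over R F. \<forall>(x, y)\<in>G. s x = y"
proof -
  define s where "s x = (THE y. (x, y) \<in> G)" for x
  have s_eq: "s x = y" if "(x, y) \<in> G" for x y
  proof -
    have "\<exists>!y. (x, y) \<in> G" using that embedding_graph_unique[OF G that] by blast
    then show ?thesis unfolding s_def using that by (rule the1_equality)
  qed
  have s_in: "(x, s x) \<in> G" if "x \<in> carrier R" for x
  proof -
    have "x \<in> Domain G" using that total by simp
    then obtain y where "(x, y) \<in> G" by (rule DomainE)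
    then show ?thesis using s_eq by simp
  qed
  have "s \<in> ring_hom R R"
  proof (rule ring_hom_memI)
    fix x y assume xy: "x \<in> carrier R" "y \<in> carrier R"
    show "s x \<in> carrier R" using embedding_graph_carrier[OF G s_in[OF xy(1)]] by simp
    show "s (x \<otimes> y) = s x \<otimes> s y" by (rule s_eq[OF embedding_graph_mult[OF G s_in[OF xy(1)] s_in[OF xy(2)]]])
    show "s (x \<oplus> y) = s x \<oplus> s y" by (rule s_eq[OF embedding_graph_add[OF G s_in[OF xy(1)] s_in[OF xy(2)]]])
  next
    show "s \<one> = \<one>" by (rule s_eq[OF embedding_graph_one[OF G]])
  qed
  moreover have "s a = a" if "a \<in> F" for a using that F s_eq by blast
  ultimately have "s \<in> aut_over R F" by (rule endomorphism_over_F_in_aut_over)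
  moreover have "\<forall>(x, y)\<in>G. s x = y" using s_eq by auto
  ultimately show ?thesis by blast
qed

lemma maximal_embedding_graph_total:
  assumes M: "embedding_graph R M" "Id_on F \<subseteq> M"
    and max: "\<And>G. embedding_graph R G \<Longrightarrow> M \<subseteq> G \<Longrightarrow> G = M"
  shows "Domain M = carrier R"
proof (rule ccontr)
  assume "Domain M \<noteq> carrier R"
  moreover have "F \<subseteq> Domain M" using Domain_mono[OF M(2)] by simp
  ultimately obtain a where a: "a \<in> Domain M" "\<And>y. y \<in> Domain M \<Longrightarrow> y \<otimes> y \<noteq> a"
    using proper_subfield_nonsquare[OF subfield_Domain_embedding_graph[OF M(1)]] by blast
  from a(1) obtain a' where aa': "(a, a') \<in> M" by (rule DomainE)
  have "a \<in> carrier R" "a' \<in> carrier R" using embedding_graph_carrier[OF M(1) aa'] by simp_all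
  then obtain b b' where b: "b \<in> carrier R" "b \<otimes> b = a" and b': "b' \<in> carrier R" "b' \<otimes> b' = a'"
    using square_root_exists by meson
  have b_notin: "b \<notin> Domain M"
  proof
    assume "b \<in> Domain M"
    then have "b \<otimes> b \<noteq> a" by (rule a(2))
    then show False using b(2) by simp
  qed
  have "adjoin_graph R M b b' = M"
    using max[OF embedding_graph_adjoin[OF M(1) aa' b b_notin b'] subset_adjoin_graph[OF M(1) b(1) b'(1)]] .
  then have "(b, b') \<in> M" using root_in_adjoin_graph[OF M(1) b(1) b'(1)] by simp
  then have "b \<in> Domain M" by (rule DomainI)
  then show False using b_notin by simp
qed

lemma embedding_graph_extends_to_aut:
  assumes G0: "embedding_graph R G0" "Id_on F \<subseteq> G0"
  shows "\<exists>s\<in>aut_over R F. \<forall>(x, y)\<in>G0. s x = y"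
proof -
  let ?A = "{G. embedding_graph R G \<and> G0 \<subseteq> G}"
  have "\<exists>M\<in>?A. \<forall>G\<in>?A. M \<subseteq> G \<longrightarrow> G = M"
  proof (rule subset_Zorn_nonempty)
    have "G0 \<in> ?A" using G0(1) by simp
    then show "?A \<noteq> {}" by blast
    fix C assume C: "C \<noteq> {}" "subset.chain ?A C"
    then have "subset.chain {G. embedding_graph R G} C" unfolding subset.chain_def by auto
    then have "embedding_graph R (\<Union>C)" using embedding_graph_Union_chain C(1) by blast
    moreover obtain G where "G \<in> C" using C(1) by blast
    then have "G0 \<subseteq> \<Union>C" using C(2) unfolding subset.chain_def by blast
    ultimately show "\<Union>C \<in> ?A" by simp
  qed
  then obtain M where "M \<in> ?A" and max: "\<forall>G\<in>?A. M \<subseteq> G \<longrightarrow> G = M" by (rule bexE)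
  then have M: "embedding_graph R M" "G0 \<subseteq> M" "Id_on F \<subseteq> M" using G0(2) by auto
  have "Domain M = carrier R"
    using maximal_embedding_graph_total[OF M(1,3)] max M(2) by blast
  then obtain s where s: "s \<in> aut_over R F" "\<forall>(x, y)\<in>M. s x = y"
    using total_embedding_graph_aut[OF M(1,3)] by blast
  moreover have "\<forall>(x, y)\<in>G0. s x = y" using s(2) M(2) by auto
  ultimately show ?thesis by blast
qed

lemma maximal_subfield_avoiding:
  assumes c: "c \<in> carrier R" "c \<notin> F"
  obtains E where "subfield E R" "F \<subseteq> E" "c \<notin> E"
    and "\<And>b. b \<in> carrier R \<Longrightarrow> b \<notin> E \<Longrightarrow> b \<otimes> b \<in> E \<Longrightarrow> \<exists>u\<in>E. \<exists>v\<in>E. c = u \<oplus> v \<otimes> b"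
proof -
  let ?A = "{E. subfield E R \<and> F \<subseteq> E \<and> c \<notin> E}"
  have "\<exists>E\<in>?A. \<forall>E'\<in>?A. E \<subseteq> E' \<longrightarrow> E' = E"
  proof (rule subset_Zorn_nonempty)
    have "F \<in> ?A" using subfield_F c(2) by simp
    then show "?A \<noteq> {}" by blast
    fix C assume C: "C \<noteq> {}" "subset.chain ?A C"
    then have "subset.chain {E. subfield E R} C" unfolding subset.chain_def by auto
    then have "subfield (\<Union>C) R" using subfield_Union_chain C(1) by blast
    moreover obtain E where "E \<in> C" using C(1) by blast
    then have "F \<subseteq> \<Union>C" using C(2) unfolding subset.chain_def by blast
    moreover have "c \<notin> \<Union>C" using C(2) unfolding subset.chain_def by blast
    ultimately show "\<Union>C \<in> ?A" by simp
  qed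
  then obtain E where "E \<in> ?A" and max: "\<forall>E'\<in>?A. E \<subseteq> E' \<longrightarrow> E' = E" by (rule bexE)
  then have E: "subfield E R" "F \<subseteq> E" "c \<notin> E" by simp_all
  have "\<exists>u\<in>E. \<exists>v\<in>E. c = u \<oplus> v \<otimes> b"
    if b: "b \<in> carrier R" "b \<notin> E" "b \<otimes> b \<in> E" for b
  proof -
    let ?G = "adjoin_graph R (Id_on E) b b"
    have Id: "embedding_graph R (Id_on E)" using embedding_graph_Id_on[OF E(1)] .
    have "(b \<otimes> b, b \<otimes> b) \<in> Id_on E" using b(3) by (rule Id_onI)
    then have "embedding_graph R ?G" using embedding_graph_adjoin[OF Id _ b(1) refl _ b(1) refl] b(2) by simp
    then have "subfield (Domain ?G) R" by (rule subfield_Domain_embedding_graph)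
    moreover have "E \<subseteq> Domain ?G" using Domain_mono[OF subset_adjoin_graph[OF Id b(1) b(1)]] by simp
    moreover have "b \<in> Domain ?G" using root_in_adjoin_graph[OF Id b(1) b(1)] by (rule DomainI)
    ultimately have "c \<in> Domain ?G" using max E(2) b(2) by blast
    then obtain y where "(c, y) \<in> ?G" by (rule DomainE)
    then obtain u u' v v' where "(u, u') \<in> Id_on E" "(v, v') \<in> Id_on E" "c = u \<oplus> v \<otimes> b"
      by (rule adjoin_graphE)
    then show ?thesis by blast
  qed
  then show ?thesis using that E by blast
qed

lemma exists_aut_over_conjugation:
  assumes E: "subfield E R" "F \<subseteq> E" and b: "b \<in> carrier R" "b \<notin> E" "b \<otimes> b \<in> E"
  obtains s where "s \<in> aut_over R F" "\<And>u v. u \<in> E \<Longrightarrow> v \<in> E \<Longrightarrow> s (u \<oplus> v \<otimes> b) = u \<oplus> v \<otimes> \<ominus> b"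
proof -
  let ?G = "adjoin_graph R (Id_on E) b (\<ominus> b)"
  have Id: "embedding_graph R (Id_on E)" using embedding_graph_Id_on[OF E(1)] .
  have "\<ominus> b \<otimes> \<ominus> b = b \<otimes> b" using b(1) by algebra
  then have nb: "\<ominus> b \<in> carrier R" "\<ominus> b \<otimes> \<ominus> b = b \<otimes> b" using b(1) by simp_all
  have "(b \<otimes> b, b \<otimes> b) \<in> Id_on E" using b(3) by (rule Id_onI)
  then have "embedding_graph R ?G"
    using embedding_graph_adjoin[OF Id _ b(1) refl _ nb] b(2) by simp
  moreover have "Id_on F \<subseteq> ?G"
    using order_trans[OF _ subset_adjoin_graph[OF Id b(1) nb(1)]] E(2) by auto
  ultimately obtain s where s: "s \<in> aut_over R F" "\<forall>(x, y)\<in>?G. s x = y"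
    using embedding_graph_extends_to_aut by blast
  have "s (u \<oplus> v \<otimes> b) = u \<oplus> v \<otimes> \<ominus> b" if "u \<in> E" "v \<in> E" for u v
    using s(2) adjoin_graphI[OF Id_onI[OF that(1)] Id_onI[OF that(2)], of R b "\<ominus> b"] by auto
  then show ?thesis using that s(1) by blast
qed

lemma exists_aut_over_moving:
  assumes two: "\<one> \<oplus> \<one> \<noteq> \<zero>" and c: "c \<in> carrier R" "c \<notin> F"
  shows "\<exists>s\<in>aut_over R F. s c \<noteq> c"
proof -
  obtain E where E: "subfield E R" "F \<subseteq> E" "c \<notin> E"
    and E_max: "\<And>b. b \<in> carrier R \<Longrightarrow> b \<notin> E \<Longrightarrow> b \<otimes> b \<in> E \<Longrightarrow> \<exists>u\<in>E. \<exists>v\<in>E. c = u \<oplus> v \<otimes> b"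
    using maximal_subfield_avoiding[OF c] by blast
  have "E \<noteq> carrier R" using E(3) c(1) by blast
  then obtain a where a: "a \<in> E" "\<And>y. y \<in> E \<Longrightarrow> y \<otimes> y \<noteq> a"
    using proper_subfield_nonsquare[OF E(1,2)] by blast
  obtain b where b: "b \<in> carrier R" "b \<otimes> b = a"
    using square_root_exists a(1) subfieldE(3)[OF E(1)] by blast
  have bE: "b \<notin> E" using a(2) b(2) by blast
  obtain u v where uv: "u \<in> E" "v \<in> E" "c = u \<oplus> v \<otimes> b"
    using E_max[OF b(1) bE] b(2) a(1) by blast
  have uvc: "u \<in> carrier R" "v \<in> carrier R" using uv(1,2) subfieldE(3)[OF E(1)] by auto
  have "v \<noteq> \<zero>"
  proof
    assume "v = \<zero>"
    then have "c = u" using uv(3) uvc b(1) by simp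
    then show False using uv(1) E(3) by simp
  qed
  obtain s where s: "s \<in> aut_over R F" "s c = u \<oplus> v \<otimes> \<ominus> b"
    using exists_aut_over_conjugation[OF E(1,2) b(1) bE] uv a(1) b(2) by metis
  have "\<zero> \<in> E" using subringE(2)[OF subfieldE(1)[OF E(1)]] .
  then have "b \<noteq> \<zero>" using bE by blast
  then have "(\<one> \<oplus> \<one>) \<otimes> (v \<otimes> b) \<noteq> \<zero>"
    using two \<open>v \<noteq> \<zero>\<close> uvc b(1) integral_iff by simp
  moreover have "(u \<oplus> v \<otimes> b) \<ominus> (u \<oplus> v \<otimes> \<ominus> b) = (\<one> \<oplus> \<one>) \<otimes> (v \<otimes> b)"
    using uvc b(1) by algebra
  then have "c \<ominus> s c = (\<one> \<oplus> \<one>) \<otimes> (v \<otimes> b)" using s(2) uv(3) by simp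
  ultimately have "c \<ominus> s c \<noteq> \<zero>" by simp
  then have "s c \<noteq> c" using r_right_minus_eq[OF c(1) c(1)] by auto
  then show ?thesis using s(1) by blast
qed

lemma algebraic_over_F:
  assumes "x \<in> carrier R"
  shows "(algebraic over F) x"
proof -
  let ?A = "{x \<in> carrier R. (algebraic over F) x}"
  have "?A = carrier R"
  proof (rule sq_closed_subfield_eq_carrier)
    show "subfield ?A R" using subfield_of_algebraics[OF subfield_F] .
    show "F \<subseteq> ?A" using algebraic_self[OF subfieldE(1)[OF subfield_F]] F_carrier by blast
    show "sq_closed_set R ?A"
      unfolding sq_closed_set_def
    proof
      fix y assume "y \<in> ?A"
      then have y: "y \<in> carrier R" "(algebraic over F) y" by simp_all
      then obtain z where z: "z \<in> carrier R" "z \<otimes> z = y" using square_root_exists by blast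
      then have "(algebraic over F) z" using algebraic_sqrt[OF subfield_F y] by simp
      then show "\<exists>z\<in>?A. z \<otimes> z = y" using z by blast
    qed
  qed
  then show ?thesis using assms by blast
qed

section \<open>Orbits and Galois subfields\<close>

abbreviation aut_orbit :: "'a \<Rightarrow> 'a set" where
  "aut_orbit x \<equiv> (\<lambda>s. s x) ` aut_over R F"

lemma aut_orbit_subset_carrier: "x \<in> carrier R \<Longrightarrow> aut_orbit x \<subseteq> carrier R"
  using ring_iso_memE(1)[OF aut_over_iso] by blast

lemma self_in_aut_orbit: "x \<in> aut_orbit x"
  using id_in_aut_over by (metis id_apply image_eqI)

lemma Irr_root_aut_orbit:
  assumes x: "x \<in> carrier R" and y: "y \<in> aut_orbit x"
  shows "eval (Irr F x) y = \<zero>"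
proof -
  obtain s where s: "s \<in> aut_over R F" "y = s x" using y by blast
  interpret ring_hom_ring R R s using ring_iso_hom_ring[OF aut_over_iso[OF s(1)]] .
  have alg: "(algebraic over F) x" using algebraic_over_F[OF x] .
  show ?thesis
    using aut_over_eval[OF subfield_F s(1) IrrE(1)[OF subfield_F x alg] x] IrrE(4)[OF subfield_F x alg] s(2)
    by simp
qed

lemma finite_card_aut_orbit_le_degree_Irr:
  assumes x: "x \<in> carrier R"
  shows "finite (aut_orbit x) \<and> card (aut_orbit x) \<le> degree (Irr F x)"
proof -
  have alg: "(algebraic over F) x" using algebraic_over_F[OF x] .
  have "Irr F x \<noteq> []" using pirreducible_degree[OF subfield_F IrrE(1,2)[OF subfield_F x alg]] by auto
  then show ?thesis
    using finite_card_le_degree_if_roots[OF poly_ring_carrier_if_subfield[OF subfield_F IrrE(1)[OF subfield_F x alg]]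
        _ aut_orbit_subset_carrier[OF x] Irr_root_aut_orbit[OF x]] by blast
qed

lemma aut_over_image_aut_orbit:
  assumes s: "s \<in> aut_over R F" and x: "x \<in> carrier R"
  shows "s ` aut_orbit x = aut_orbit x"
proof
  show "s ` aut_orbit x \<subseteq> aut_orbit x"
  proof (rule image_subsetI)
    fix y assume "y \<in> aut_orbit x"
    then obtain t where t: "t \<in> aut_over R F" "y = t x" by blast
    then have "s y = (s \<circ> t) x" by simp
    then show "s y \<in> aut_orbit x" using aut_over_comp[OF s t(1)] by blast
  qed
  show "aut_orbit x \<subseteq> s ` aut_orbit x"
  proof
    fix y assume "y \<in> aut_orbit x"
    then obtain t where t: "t \<in> aut_over R F" "y = t x" by blast
    let ?u = "inv_into (carrier R) s \<circ> t"
    have u: "?u \<in> aut_over R F" using aut_over_comp[OF aut_over_inv_into[OF F_carrier s] t(1)] .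
    have "y = s (?u x)"
      using t ring_iso_inv_into(3)[OF aut_over_iso[OF s]] ring_iso_memE(1)[OF aut_over_iso[OF t(1)] x] by simp
    moreover have "?u x \<in> aut_orbit x" using u by blast
    ultimately show "y \<in> s ` aut_orbit x" by (rule image_eqI)
  qed
qed

lemma poly_of_aut_orbit_in_F:
  assumes two: "\<one> \<oplus> \<one> \<noteq> \<zero>" and x: "x \<in> carrier R"
  shows "poly_of_roots R (aut_orbit x) \<in> carrier (F[X])"
proof -
  let ?q = "poly_of_roots R (aut_orbit x)"
  have q: "?q \<in> carrier (poly_ring R)" using poly_of_roots_closed[OF aut_orbit_subset_carrier[OF x]] .
  have "c \<in> F" if c: "c \<in> set ?q" for c
  proof (rule ccontr)
    assume "c \<notin> F"
    moreover have "c \<in> carrier R" using c q polynomial_incl unfolding sym[OF univ_poly_carrier] by blast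
    ultimately obtain s where s: "s \<in> aut_over R F" "s c \<noteq> c"
      using exists_aut_over_moving[OF two] by blast
    have "map s ?q = ?q"
      using map_poly_of_roots[OF aut_over_iso[OF s(1)] aut_orbit_subset_carrier[OF x]]
        aut_over_image_aut_orbit[OF s(1) x] by simp
    then show False using c s(2) map_eq_conv[of s ?q id] by simp
  qed
  then show ?thesis using q unfolding sym[OF univ_poly_carrier] polynomial_def by auto
qed

lemma card_aut_orbit_eq_degree_Irr:
  assumes two: "\<one> \<oplus> \<one> \<noteq> \<zero>" and x: "x \<in> carrier R"
  shows "card (aut_orbit x) = degree (Irr F x)"
proof (rule antisym)
  show "card (aut_orbit x) \<le> degree (Irr F x)" using finite_card_aut_orbit_le_degree_Irr[OF x] by blast
  let ?q = "poly_of_roots R (aut_orbit x)"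
  have fin: "finite (aut_orbit x)" using finite_card_aut_orbit_le_degree_Irr[OF x] by blast
  have alg: "(algebraic over F) x" using algebraic_over_F[OF x] .
  have "Irr F x pdivides ?q"
    using Irr_minimal[OF subfield_F x alg poly_of_aut_orbit_in_F[OF two x]]
      poly_of_roots_root[OF fin aut_orbit_subset_carrier[OF x] self_in_aut_orbit] by simp
  then have "degree (Irr F x) \<le> degree ?q"
    using pdivides_imp_degree_le[OF subfieldE(1)[OF subfield_F] IrrE(1)[OF subfield_F x alg]
        poly_of_aut_orbit_in_F[OF two x]] degree_poly_of_roots[OF fin aut_orbit_subset_carrier[OF x]] by blast
  then show "degree (Irr F x) \<le> card (aut_orbit x)"
    using degree_poly_of_roots[OF fin aut_orbit_subset_carrier[OF x]] by simp
qed

lemma galois_ext_if_aut_over_stable: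
  assumes two: "\<one> \<oplus> \<one> \<noteq> \<zero>" and M: "subfield M R" "F \<subseteq> M"
    and stable: "\<And>s. s \<in> aut_over R F \<Longrightarrow> s ` M \<subseteq> M"
  shows "galois_ext R F M"
proof -
  have "algebraic F x \<and> (\<exists>rs. distinct rs \<and> set rs \<subseteq> M \<and> length rs = degree (Irr F x) \<and>
      (\<forall>r\<in>set rs. eval (Irr F x) r = \<zero>))" if "x \<in> M" for x
  proof -
    have x: "x \<in> carrier R" using that subfieldE(3)[OF M(1)] by blast
    obtain rs where rs: "set rs = aut_orbit x" "distinct rs"
      using finite_distinct_list finite_card_aut_orbit_le_degree_Irr[OF x] by blast
    have "length rs = degree (Irr F x)"
      using distinct_card[OF rs(2)] rs(1) card_aut_orbit_eq_degree_Irr[OF two x] by simp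
    moreover have "set rs \<subseteq> M" using rs(1) stable that by blast
    moreover have "\<forall>r\<in>set rs. eval (Irr F x) r = \<zero>" using rs(1) Irr_root_aut_orbit[OF x] by blast
    moreover have "algebraic F x" using algebraic_over_F[OF x] by (simp add: over_def)
    ultimately show ?thesis using rs(2) by blast
  qed
  then show ?thesis unfolding galois_ext_def using subfield_F M by blast
qed

theorem galois_ext_tower:
  assumes two: "\<one> \<oplus> \<one> \<noteq> \<zero>" and L: "quadratic_ext R F L"
  shows "galois_ext R F (tower R L n)"
proof -
  have Ls: "subfield L R" and FL: "F \<subseteq> L" using L unfolding quadratic_ext_def by auto
  have "s ` L = L" if "s \<in> aut_over R F" for s
    using aut_over_image_eqI[OF F_carrier subfieldE(3)[OF Ls] quadratic_ext_aut_over_image[OF L] that] .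
  then have "s ` tower R L n \<subseteq> tower R L n" if "s \<in> aut_over R F" for s
    unfolding tower_def using tower_aux_image[OF Ls aut_over_iso[OF that]] that by simp
  moreover have "F \<subseteq> tower R L n" using FL subset_tower_aux[of L] unfolding tower_def by blast
  ultimately show ?thesis
    using galois_ext_if_aut_over_stable[OF two subfield_tower_aux[OF Ls]] unfolding tower_def by blast
qed

end

theorem proposition1:
  fixes R :: "('a, 'b) ring_scheme" and F L :: "'a set"
  assumes "quadratic_closure R F"
    and "\<one>\<^bsub>R\<^esub> \<oplus>\<^bsub>R\<^esub> \<one>\<^bsub>R\<^esub> \<noteq> \<zero>\<^bsub>R\<^esub>"
    and "quadratic_ext R F L"
  shows "galois_ext R F (tower R L 3)"
proof -
  have "field R" using assms(1) unfolding quadratic_closure_def by blast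
  then interpret quadratic_closure_field R F
    using assms(1) by (intro quadratic_closure_field.intro quadratic_closure_field_axioms.intro)
  show ?thesis using galois_ext_tower[OF assms(2,3)] .
qed

end
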